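(* Let $\kappa$ be an infinite cardinal and let $X$ be a strongly zero-dimensional space. Then $X$ is an $F_\kappa$-space if and only if its Stone–Čech compactification $\beta X$ is an $F_\kappa$-space.
   Context: A space is zero-dimensional if it has a base of clopen sets; a Tychonoff space $X$ is strongly zero-dimensional if $\beta X$ is zero-dimensional. For a zero-dimensional space $X$ and an open $U\subseteq X$, the ($X$-)type $\tau(U)$ is the least cardinal $\tau$ such that $U$ is a union of $\tau$ many clopen subsets of $X$. A zero-dimensional space is an $F_\kappa$-space if every open subset of type less than $\kappa$ is $C^*$-embedded (every bounded continuous real-valued function on it extends continuously to the whole space). *)

theory Defs
  imports "HOL-Analysis.Analysis"
begin

definition zero_dimensional_space :: "'a topology \<Rightarrow> bool" where
  "zero_dimensional_space X \<longleftrightarrow>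
     (\<forall>U x. openin X U \<and> x \<in> U \<longrightarrow>
        (\<exists>C. openin X C \<and> closedin X C \<and> x \<in> C \<and> C \<subseteq> U))"

definition C_star_embedded :: "'a topology \<Rightarrow> 'a set \<Rightarrow> bool" where
  "C_star_embedded X U \<longleftrightarrow>
     (\<forall>f. continuous_map (subtopology X U) euclideanreal f \<and>
          (\<exists>B. \<forall>x\<in>U. \<bar>f x\<bar> \<le> B) \<longrightarrow>
        (\<exists>g. continuous_map X euclideanreal g \<and> (\<forall>x\<in>U. g x = f x)))"

definition type_less :: "'a topology \<Rightarrow> 'a set \<Rightarrow> 'c set \<Rightarrow> bool" where
  "type_less X U K \<longleftrightarrow>
     (\<exists>\<F>. (\<forall>C\<in>\<F>. openin X C \<and> closedin X C) \<and> \<Union>\<F> = U \<and>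
          (card_of \<F>, card_of K) \<in> ordLess)"

definition F_kappa_space :: "'c set \<Rightarrow> 'a topology \<Rightarrow> bool" where
  "F_kappa_space K X \<longleftrightarrow> zero_dimensional_space X \<and>
     (\<forall>U. openin X U \<and> type_less X U K \<longrightarrow> C_star_embedded X U)"

definition stone_cech_compactification ::
    "'a topology \<Rightarrow> 'b topology \<Rightarrow> ('a \<Rightarrow> 'b) \<Rightarrow> bool" where
  "stone_cech_compactification X Y e \<longleftrightarrow>
     compact_space Y \<and> Hausdorff_space Y \<and> embedding_map X Y e \<and>
     Y closure_of (e ` topspace X) = topspace Y \<and>
     (\<forall>f. continuous_map X euclideanreal f \<and> (\<exists>B. \<forall>x\<in>topspace X. \<bar>f x\<bar> \<le> B) \<longrightarrow>
        (\<exists>g. continuous_map Y euclideanreal g \<and> (\<forall>x\<in>topspace X. g (e x) = f x)))"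

definition strongly_zero_dimensional_wrt ::
    "'a topology \<Rightarrow> 'b topology \<Rightarrow> ('a \<Rightarrow> 'b) \<Rightarrow> bool" where
  "strongly_zero_dimensional_wrt X Y e \<longleftrightarrow>
     completely_regular_space X \<and> Hausdorff_space X \<and>
     stone_cech_compactification X Y e \<and> zero_dimensional_space Y"

end

theory Submission
  imports Defs
begin

text \<open>Extending the indicator of a clopen set \<open>C\<close> of \<open>X\<close> to \<open>\<beta>X\<close> shows that
  \<open>C\<close> is the trace on \<open>X\<close> of a clopen set \<open>C\<^sup>*\<close> of \<open>\<beta>X\<close>. Hence open sets of
  type \<open>< \<kappa>\<close> pass between the two spaces: \<open>V \<mapsto> X \<inter> V\<close> and \<open>\<Union>\<F> \<mapsto> \<Union>{C\<^sup>* | C \<in> \<F>}\<close>.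
  If \<open>X\<close> is an \<open>F\<^sub>\<kappa>\<close>-space, a bounded function on \<open>V \<subseteq> \<beta>X\<close> is restricted to
  \<open>X \<inter> V\<close>, extended to \<open>X\<close> and then to \<open>\<beta>X\<close>; the extension agrees with it on
  \<open>V\<close> because \<open>X \<inter> V\<close> is dense in the open set \<open>V\<close>. Conversely, for a bounded
  function \<open>f\<close> on \<open>\<Union>\<F> \<subseteq> X\<close>, the Stone-Cech extensions of the functions
  "\<open>f\<close> on \<open>C\<close>, \<open>0\<close> off \<open>C\<close>" agree by density on the overlaps of the open sets
  \<open>C\<^sup>*\<close>; pasted together they form a bounded continuous function on an open
  subset of \<open>\<beta>X\<close> of type \<open>< \<kappa>\<close>, whose extension to \<open>\<beta>X\<close> restricts to an
  extension of \<open>f\<close>.\<close>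

lemma continuous_maps_agree_on_dense_open:
  assumes dense: "Y closure_of D = topspace Y" and W: "openin Y W"
    and Z: "Hausdorff_space Z"
    and f: "continuous_map (subtopology Y W) Z f" and g: "continuous_map (subtopology Y W) Z g"
    and fg: "\<And>y. y \<in> W \<inter> D \<Longrightarrow> f y = g y"
    and y: "y \<in> W"
  shows "f y = g y"
proof (rule forall_in_closure_of_eq[OF _ Z f g fg])
  have "W \<inter> Y closure_of D \<subseteq> Y closure_of (W \<inter> D)"
    using openin_Int_closure_of_subset[OF W] .
  then show "y \<in> subtopology Y W closure_of (W \<inter> D)"
    using y dense openin_subset[OF W]
    by (auto simp: closure_of_subtopology_open[OF disjI1, OF W])
qed

lemma embedding_map_imp_continuous_map:
  "embedding_map X Y e \<Longrightarrow> continuous_map X Y e"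
  by (metis embedding_map_def homeomorphic_imp_continuous_map continuous_map_in_subtopology)

lemma embedding_map_openin_preimage:
  assumes e: "embedding_map X Y e" and U: "openin X U"
  obtains W where "openin Y W" "U = {x \<in> topspace X. e x \<in> W}"
proof -
  have hom: "homeomorphic_map X (subtopology Y (e ` topspace X)) e"
    using e by (simp add: embedding_map_def)
  then have "openin (subtopology Y (e ` topspace X)) (e ` U)"
    using U by (simp add: homeomorphic_map_openness openin_subset)
  then obtain W where W: "openin Y W" "e ` U = W \<inter> e ` topspace X"
    by (auto simp: openin_subtopology)
  have inj: "inj_on e (topspace X)"
    using homeomorphic_imp_injective_map[OF hom] .
  have "x \<in> U \<longleftrightarrow> e x \<in> W" if "x \<in> topspace X" for x
    using W(2) inj_on_image_mem_iff[OF inj that openin_subset[OF U]] that by blast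
  then have "U = {x \<in> topspace X. e x \<in> W}"
    using openin_subset[OF U] by blast
  with W(1) show thesis by (rule that)
qed

lemma zero_dimensional_space_embedding:
  assumes e: "embedding_map X Y e" and Y: "zero_dimensional_space Y"
  shows "zero_dimensional_space X"
  unfolding zero_dimensional_space_def
proof (intro allI impI)
  fix U x assume "openin X U \<and> x \<in> U"
  then obtain W where W: "openin Y W" "U = {x \<in> topspace X. e x \<in> W}" and x: "x \<in> U"
    using embedding_map_openin_preimage[OF e] by metis
  obtain D where D: "openin Y D" "closedin Y D" "e x \<in> D" "D \<subseteq> W"
    using Y W x unfolding zero_dimensional_space_def by blast
  have "continuous_map X Y e"
    using e by (rule embedding_map_imp_continuous_map)
  then show "\<exists>C. openin X C \<and> closedin X C \<and> x \<in> C \<and> C \<subseteq> U"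
    using D W x
    by (intro exI[of _ "{x \<in> topspace X. e x \<in> D}"])
       (auto intro: openin_continuous_map_preimage closedin_continuous_map_preimage)
qed

lemma type_less_UN_clopen:
  assumes "\<And>i. i \<in> I \<Longrightarrow> openin X (C i) \<and> closedin X (C i)"
    and "(card_of I, card_of K) \<in> ordLess"
  shows "type_less X (\<Union>i\<in>I. C i) K"
  unfolding type_less_def
proof (intro exI conjI)
  show "\<forall>D\<in>C ` I. openin X D \<and> closedin X D"
    using assms(1) by blast
  show "(card_of (C ` I), card_of K) \<in> ordLess"
    using ordLeq_ordLess_trans[OF card_of_image assms(2)] .
qed simp

lemma continuous_map_extend_by_zero_clopen:
  assumes f: "continuous_map (subtopology X U) euclideanreal f"
    and C: "openin X C" "closedin X C" "C \<subseteq> U"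
  shows "continuous_map X euclideanreal (\<lambda>x. if x \<in> C then f x else 0)"
proof (rule continuous_map_cases)
  have "X frontier_of C = {}"
    using C by (simp add: frontier_of_def closure_of_closedin interior_of_openin)
  then show "\<And>x. x \<in> X frontier_of {x. x \<in> C} \<Longrightarrow> f x = 0" by simp
  show "continuous_map (subtopology X (X closure_of {x. x \<in> C})) euclideanreal f"
    using continuous_map_from_subtopology_mono[OF f \<open>C \<subseteq> U\<close>] C
    by (simp add: closure_of_closedin)
qed simp

lemma continuous_map_real_truncate:
  assumes f: "continuous_map X euclideanreal f" and "0 \<le> B"
  obtains g where "continuous_map X euclideanreal g" "\<And>x. \<bar>g x\<bar> \<le> B"
    "\<And>x. \<bar>f x\<bar> \<le> B \<Longrightarrow> g x = f x"
proof
  show "continuous_map X euclideanreal (\<lambda>x. max (-B) (min B (f x)))"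
    using f by (intro continuous_map_real_max continuous_map_real_min) auto
qed (use \<open>0 \<le> B\<close> in \<open>auto simp: abs_le_iff\<close>)

lemma C_star_embedded_bounded_extension:
  assumes "C_star_embedded X U" and "0 \<le> B"
    and f: "continuous_map (subtopology X U) euclideanreal f"
    and B: "\<And>x. x \<in> U \<Longrightarrow> \<bar>f x\<bar> \<le> B"
  obtains g where "continuous_map X euclideanreal g" "\<And>x. x \<in> U \<Longrightarrow> g x = f x"
    "\<And>x. \<bar>g x\<bar> \<le> B"
proof -
  have "\<exists>B. \<forall>x\<in>U. \<bar>f x\<bar> \<le> B"
    using B by blast
  then obtain h where h: "continuous_map X euclideanreal h" "\<And>x. x \<in> U \<Longrightarrow> h x = f x"
    using assms(1)[unfolded C_star_embedded_def, rule_format, of f] f by blast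
  obtain g where g: "continuous_map X euclideanreal g" "\<And>x. \<bar>g x\<bar> \<le> B"
    "\<And>x. \<bar>h x\<bar> \<le> B \<Longrightarrow> g x = h x"
    using continuous_map_real_truncate[OF h(1) \<open>0 \<le> B\<close>] by blast
  show thesis
  proof (rule that[OF g(1) _ g(2)])
    fix x assume "x \<in> U"
    then show "g x = f x"
      using g(3) h(2) B by metis
  qed
qed

lemma stone_cech_bounded_extension:
  assumes "stone_cech_compactification X Y e" and "0 \<le> B"
    and f: "continuous_map X euclideanreal f"
    and B: "\<And>x. x \<in> topspace X \<Longrightarrow> \<bar>f x\<bar> \<le> B"
  obtains g where "continuous_map Y euclideanreal g" "\<And>x. x \<in> topspace X \<Longrightarrow> g (e x) = f x"
    "\<And>y. \<bar>g y\<bar> \<le> B"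
proof -
  have "\<exists>B. \<forall>x\<in>topspace X. \<bar>f x\<bar> \<le> B"
    using B by blast
  then obtain h where h: "continuous_map Y euclideanreal h"
    "\<And>x. x \<in> topspace X \<Longrightarrow> h (e x) = f x"
    using assms(1)[unfolded stone_cech_compactification_def] f by blast
  obtain g where g: "continuous_map Y euclideanreal g" "\<And>y. \<bar>g y\<bar> \<le> B"
    "\<And>y. \<bar>h y\<bar> \<le> B \<Longrightarrow> g y = h y"
    using continuous_map_real_truncate[OF h(1) \<open>0 \<le> B\<close>] by blast
  show thesis
  proof (rule that[OF g(1) _ g(2)])
    fix x assume "x \<in> topspace X"
    then show "g (e x) = f x"
      using g(3) h(2) B by metis
  qed
qed

lemma stone_cech_continuous_maps_agree:
  assumes SC: "stone_cech_compactification X Y e" and W: "openin Y W"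
    and Z: "Hausdorff_space Z"
    and f: "continuous_map (subtopology Y W) Z f" and g: "continuous_map (subtopology Y W) Z g"
    and fg: "\<And>x. x \<in> topspace X \<Longrightarrow> e x \<in> W \<Longrightarrow> f (e x) = g (e x)"
    and y: "y \<in> W"
  shows "f y = g y"
proof (rule continuous_maps_agree_on_dense_open[OF _ W Z f g _ y])
  show "Y closure_of (e ` topspace X) = topspace Y"
    using SC by (simp add: stone_cech_compactification_def)
qed (use fg in auto)

lemma stone_cech_clopen_extension:
  assumes SC: "stone_cech_compactification X Y e" and C: "openin X C" "closedin X C"
  obtains D where "openin Y D" "closedin Y D"
    "\<And>x. x \<in> topspace X \<Longrightarrow> e x \<in> D \<longleftrightarrow> x \<in> C"
proof -
  have "continuous_map X euclideanreal (\<lambda>x. if x \<in> C then 1 else 0)"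
    using continuous_map_extend_by_zero_clopen[of X C "\<lambda>_. 1"] C by simp
  then obtain H where H: "continuous_map Y euclideanreal H"
    "\<And>x. x \<in> topspace X \<Longrightarrow> H (e x) = (if x \<in> C then 1 else 0)"
    by (rule stone_cech_bounded_extension[OF SC zero_le_one]) auto
  have "continuous_map Y euclideanreal (\<lambda>y. H y * (H y - 1))"
    using H(1) by (intro continuous_map_real_mult continuous_map_diff) auto
  \<comment> \<open>\<open>H \<circ> e\<close> takes only the values 0 and 1, hence so does \<open>H\<close> by density.\<close>
  then have "H y * (H y - 1) = 0" if "y \<in> topspace Y" for y
    using stone_cech_continuous_maps_agree[OF SC openin_topspace, of euclideanreal
        "\<lambda>y. H y * (H y - 1)" "\<lambda>_. 0"] H(2) that
    by simp
  then have H01: "H y = 0 \<or> H y = 1" if "y \<in> topspace Y" for y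
    using that by auto
  define D where "D = {y \<in> topspace Y. H y \<in> {1/2..}}"
  have "D = {y \<in> topspace Y. H y \<in> {1/2<..}}"
    using H01 by (force simp: D_def)
  then have "openin Y D"
    using openin_continuous_map_preimage[OF H(1), of "{1/2<..}"] by simp
  moreover have "closedin Y D"
    unfolding D_def by (rule closedin_continuous_map_preimage[OF H(1)]) simp
  moreover have "e x \<in> D \<longleftrightarrow> x \<in> C" if "x \<in> topspace X" for x
    using H(2)[OF that] that embedding_map_imp_continuous_map SC
    by (auto simp: D_def stone_cech_compactification_def continuous_map_def)
  ultimately show thesis
    using that by blast
qed

lemma type_less_continuous_map_preimage:
  assumes e: "continuous_map X Y e" and V: "type_less Y V K"
  shows "type_less X {x \<in> topspace X. e x \<in> V} K"
proof -
  obtain \<G> where \<G>: "\<forall>D\<in>\<G>. openin Y D \<and> closedin Y D" "\<Union>\<G> = V"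
    "(card_of \<G>, card_of K) \<in> ordLess"
    using V unfolding type_less_def by blast
  have "type_less X (\<Union>D\<in>\<G>. {x \<in> topspace X. e x \<in> D}) K"
    using \<G>(1,3) e
    by (intro type_less_UN_clopen)
       (auto intro: openin_continuous_map_preimage closedin_continuous_map_preimage)
  moreover have "(\<Union>D\<in>\<G>. {x \<in> topspace X. e x \<in> D}) = {x \<in> topspace X. e x \<in> V}"
    using \<G>(2) by blast
  ultimately show ?thesis
    by simp
qed

lemma C_star_embedded_stone_cech:
  assumes SC: "stone_cech_compactification X Y e" and V: "openin Y V"
    and U: "C_star_embedded X {x \<in> topspace X. e x \<in> V}"
  shows "C_star_embedded Y V"
  unfolding C_star_embedded_def
proof (intro allI impI)
  fix g
  assume "continuous_map (subtopology Y V) euclideanreal g \<and> (\<exists>B. \<forall>y\<in>V. \<bar>g y\<bar> \<le> B)"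
  then obtain B0 where g: "continuous_map (subtopology Y V) euclideanreal g"
    and B0: "\<forall>y\<in>V. \<bar>g y\<bar> \<le> B0"
    by blast
  define B where "B = max B0 0"
  have B: "\<And>y. y \<in> V \<Longrightarrow> \<bar>g y\<bar> \<le> B" "0 \<le> B"
    using B0 by (auto simp: B_def le_max_iff_disj)
  have e: "continuous_map X Y e"
    using SC by (simp add: stone_cech_compactification_def embedding_map_imp_continuous_map)
  have "continuous_map (subtopology X {x \<in> topspace X. e x \<in> V}) (subtopology Y V) e"
    using continuous_map_from_subtopology[OF e] by (auto simp: continuous_map_in_subtopology)
  then have ge:
    "continuous_map (subtopology X {x \<in> topspace X. e x \<in> V}) euclideanreal (g \<circ> e)"
    using g by (rule continuous_map_compose)
  obtain h where h: "continuous_map X euclideanreal h"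
      "\<And>x. x \<in> {x \<in> topspace X. e x \<in> V} \<Longrightarrow> h x = (g \<circ> e) x" "\<And>x. \<bar>h x\<bar> \<le> B"
    by (rule C_star_embedded_bounded_extension[OF U B(2) ge]) (use B(1) in auto)
  obtain H where H: "continuous_map Y euclideanreal H"
    "\<And>x. x \<in> topspace X \<Longrightarrow> H (e x) = h x"
    by (rule stone_cech_bounded_extension[OF SC B(2) h(1)]) (use h(3) in auto)
  have "H y = g y" if "y \<in> V" for y
    using stone_cech_continuous_maps_agree[OF SC V _ continuous_map_from_subtopology[OF H(1)] g]
      H(2) h(2) that by simp
  with H(1) show "\<exists>G. continuous_map Y euclideanreal G \<and> (\<forall>y\<in>V. G y = g y)"
    by blast
qed

lemma F_kappa_space_stone_cech:
  assumes SC: "stone_cech_compactification X Y e" and "zero_dimensional_space Y"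
    and FX: "F_kappa_space K X"
  shows "F_kappa_space K Y"
proof -
  have e: "continuous_map X Y e"
    using SC by (simp add: stone_cech_compactification_def embedding_map_imp_continuous_map)
  have "C_star_embedded Y V" if V: "openin Y V" "type_less Y V K" for V
  proof (rule C_star_embedded_stone_cech[OF SC V(1)])
    have "openin X {x \<in> topspace X. e x \<in> V}"
      using openin_continuous_map_preimage[OF e V(1)] .
    moreover have "type_less X {x \<in> topspace X. e x \<in> V} K"
      using type_less_continuous_map_preimage[OF e V(2)] .
    ultimately show "C_star_embedded X {x \<in> topspace X. e x \<in> V}"
      using FX by (simp add: F_kappa_space_def)
  qed
  with assms(2) show ?thesis
    by (simp add: F_kappa_space_def)
qed

lemma stone_cech_extension_on_clopen_union:
  assumes SC: "stone_cech_compactification X Y e"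
    and \<F>: "\<And>C. C \<in> \<F> \<Longrightarrow> openin X C \<and> closedin X C"
    and f: "continuous_map (subtopology X (\<Union>\<F>)) euclideanreal f"
    and B: "\<And>x. x \<in> \<Union>\<F> \<Longrightarrow> \<bar>f x\<bar> \<le> B" and "0 \<le> B"
  obtains D g where "\<And>C. C \<in> \<F> \<Longrightarrow> openin Y (D C) \<and> closedin Y (D C)"
    "\<And>C x. C \<in> \<F> \<Longrightarrow> x \<in> topspace X \<Longrightarrow> e x \<in> D C \<longleftrightarrow> x \<in> C"
    "continuous_map (subtopology Y (\<Union>C\<in>\<F>. D C)) euclideanreal g"
    "\<And>y. y \<in> (\<Union>C\<in>\<F>. D C) \<Longrightarrow> \<bar>g y\<bar> \<le> B"
    "\<And>x. x \<in> \<Union>\<F> \<Longrightarrow> g (e x) = f x"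
proof -
  have "\<forall>C\<in>\<F>. \<exists>D. openin Y D \<and> closedin Y D \<and>
      (\<forall>x\<in>topspace X. e x \<in> D \<longleftrightarrow> x \<in> C)"
    using stone_cech_clopen_extension[OF SC] \<F> by metis
  then obtain D where D: "\<And>C. C \<in> \<F> \<Longrightarrow> openin Y (D C) \<and> closedin Y (D C)"
    "\<And>C x. C \<in> \<F> \<Longrightarrow> x \<in> topspace X \<Longrightarrow> e x \<in> D C \<longleftrightarrow> x \<in> C"
    by metis
  have "\<exists>H. continuous_map Y euclideanreal H \<and> (\<forall>y. \<bar>H y\<bar> \<le> B) \<and>
      (\<forall>x\<in>C. H (e x) = f x)"
    if C: "C \<in> \<F>" for C
  proof -
    have "continuous_map X euclideanreal (\<lambda>x. if x \<in> C then f x else 0)"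
      using continuous_map_extend_by_zero_clopen[OF f] \<F>[OF C] C by blast
    then obtain H where H: "continuous_map Y euclideanreal H" "\<And>y. \<bar>H y\<bar> \<le> B"
      "\<And>x. x \<in> topspace X \<Longrightarrow> H (e x) = (if x \<in> C then f x else 0)"
      by (rule stone_cech_bounded_extension[OF SC \<open>0 \<le> B\<close>]) (use B C \<open>0 \<le> B\<close> in auto)
    have "C \<subseteq> topspace X"
      using \<F>[OF C] openin_subset by blast
    with H show ?thesis
      by (intro exI[of _ H]) auto
  qed
  then obtain H where H: "\<And>C. C \<in> \<F> \<Longrightarrow> continuous_map Y euclideanreal (H C)"
    "\<And>C y. C \<in> \<F> \<Longrightarrow> \<bar>H C y\<bar> \<le> B"
    "\<And>C x. C \<in> \<F> \<Longrightarrow> x \<in> C \<Longrightarrow> H C (e x) = f x"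
    by metis
  define V where "V = (\<Union>C\<in>\<F>. D C)"
  have V: "openin Y V"
    unfolding V_def using D(1) by blast
  have agree: "H C y = H C' y"
    if C: "C \<in> \<F>" "C' \<in> \<F>" and y: "y \<in> D C \<inter> D C'" for C C' y
  proof (rule stone_cech_continuous_maps_agree[OF SC _ _ _ _ _ y])
    show "openin Y (D C \<inter> D C')"
      using D(1) C by blast
    show "H C (e x) = H C' (e x)" if "x \<in> topspace X" "e x \<in> D C \<inter> D C'" for x
      using H(3) C D(2) that by auto
    show "continuous_map (subtopology Y (D C \<inter> D C')) euclideanreal (H C)"
      "continuous_map (subtopology Y (D C \<inter> D C')) euclideanreal (H C')"
      using H(1) C by (blast intro: continuous_map_from_subtopology)+
  qed simp
  obtain g where g: "continuous_map (subtopology Y V) euclideanreal g"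
    "\<And>y C. C \<in> \<F> \<Longrightarrow> y \<in> topspace (subtopology Y V) \<inter> D C \<Longrightarrow> g y = H C y"
  proof (rule pasting_lemma_exists[where X="subtopology Y V" and I=\<F> and T=D and f=H])
    show "openin (subtopology Y V) (D C)" if "C \<in> \<F>" for C
      using D(1)[OF that] that openin_open_subtopology[OF V] by (auto simp: V_def)
  qed (auto simp: V_def intro: agree continuous_map_from_subtopology H(1))
  have gD: "g y = H C y" if "C \<in> \<F>" "y \<in> D C" for C y
    using g(2)[OF that(1)] D(1)[OF that(1)] openin_subset that by (fastforce simp: V_def)
  show thesis
  proof (rule that[OF D(1) D(2) g(1)[unfolded V_def]])
    fix y assume "y \<in> (\<Union>C\<in>\<F>. D C)"
    then show "\<bar>g y\<bar> \<le> B"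
      using gD H(2) by auto
  next
    fix x assume "x \<in> \<Union>\<F>"
    then obtain C where C: "C \<in> \<F>" "x \<in> C"
      by blast
    then have "e x \<in> D C"
      using D(2) \<F> openin_subset by blast
    then show "g (e x) = f x"
      using gD H(3) C by simp
  qed
qed

lemma F_kappa_space_of_stone_cech:
  assumes SC: "stone_cech_compactification X Y e" and FY: "F_kappa_space K Y"
  shows "F_kappa_space K X"
proof -
  have e: "embedding_map X Y e"
    using SC by (simp add: stone_cech_compactification_def)
  have "C_star_embedded X U" if U: "openin X U" "type_less X U K" for U
    unfolding C_star_embedded_def
  proof (intro allI impI)
    fix f
    assume "continuous_map (subtopology X U) euclideanreal f \<and> (\<exists>B. \<forall>x\<in>U. \<bar>f x\<bar> \<le> B)"
    then obtain B0 where f: "continuous_map (subtopology X U) euclideanreal f"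
      and B0: "\<forall>x\<in>U. \<bar>f x\<bar> \<le> B0"
      by blast
    define B where "B = max B0 0"
    have B: "\<And>x. x \<in> U \<Longrightarrow> \<bar>f x\<bar> \<le> B" "0 \<le> B"
      using B0 by (auto simp: B_def le_max_iff_disj)
    obtain \<F> where \<F>: "\<forall>C\<in>\<F>. openin X C \<and> closedin X C" "\<Union>\<F> = U"
      "(card_of \<F>, card_of K) \<in> ordLess"
      using U(2) unfolding type_less_def by blast
    obtain D g where D: "\<And>C. C \<in> \<F> \<Longrightarrow> openin Y (D C) \<and> closedin Y (D C)"
      "\<And>C x. C \<in> \<F> \<Longrightarrow> x \<in> topspace X \<Longrightarrow> e x \<in> D C \<longleftrightarrow> x \<in> C"
      and g: "continuous_map (subtopology Y (\<Union>C\<in>\<F>. D C)) euclideanreal g"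
        "\<And>y. y \<in> (\<Union>C\<in>\<F>. D C) \<Longrightarrow> \<bar>g y\<bar> \<le> B"
        "\<And>x. x \<in> \<Union>\<F> \<Longrightarrow> g (e x) = f x"
    proof (rule stone_cech_extension_on_clopen_union[OF SC _ _ _ B(2)])
      show "continuous_map (subtopology X (\<Union>\<F>)) euclideanreal f"
        using f \<F>(2) by simp
      show "\<bar>f x\<bar> \<le> B" if "x \<in> \<Union>\<F>" for x
        using B(1) \<F>(2) that by blast
      show "\<And>C. C \<in> \<F> \<Longrightarrow> openin X C \<and> closedin X C"
        using \<F>(1) by blast
    qed (rule that)
    have "openin Y (\<Union>C\<in>\<F>. D C)"
      using D(1) by blast
    moreover have "type_less Y (\<Union>C\<in>\<F>. D C) K"
      using D(1) \<F>(3) by (rule type_less_UN_clopen)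
    ultimately have "C_star_embedded Y (\<Union>C\<in>\<F>. D C)"
      using FY by (simp add: F_kappa_space_def)
    then obtain G where G: "continuous_map Y euclideanreal G"
      "\<And>y. y \<in> (\<Union>C\<in>\<F>. D C) \<Longrightarrow> G y = g y"
      using C_star_embedded_bounded_extension[OF _ B(2) g(1,2)] by metis
    show "\<exists>h. continuous_map X euclideanreal h \<and> (\<forall>x\<in>U. h x = f x)"
    proof (intro exI conjI ballI)
      show "continuous_map X euclideanreal (G \<circ> e)"
        using embedding_map_imp_continuous_map[OF e] G(1) by (rule continuous_map_compose)
      fix x assume "x \<in> U"
      then obtain C where C: "C \<in> \<F>" "x \<in> C"
        using \<F>(2) by blast
      then have "e x \<in> D C"
        using D(2) \<F>(1) openin_subset by blast
      then have "G (e x) = g (e x)"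
        using G(2) C(1) by blast
      also have "\<dots> = f x"
        using g(3) C by blast
      finally show "(G \<circ> e) x = f x"
        by simp
    qed
  qed
  moreover have "zero_dimensional_space X"
    using zero_dimensional_space_embedding[OF e] FY by (simp add: F_kappa_space_def)
  ultimately show ?thesis
    by (simp add: F_kappa_space_def)
qed

theorem theorem5p1:
  fixes X :: "'a topology" and bX :: "'b topology" and e :: "'a \<Rightarrow> 'b"
    and K :: "'c set"
  assumes "infinite K"
    and "stone_cech_compactification X bX e"
    and "strongly_zero_dimensional_wrt X bX e"
  shows "F_kappa_space K X \<longleftrightarrow> F_kappa_space K bX"
proof -
  have "zero_dimensional_space bX"
    using assms(3) by (simp add: strongly_zero_dimensional_wrt_def)
  then show ?thesis
    using F_kappa_space_stone_cech[OF assms(2)] F_kappa_space_of_stone_cech[OF assms(2)] by blast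
qed

end
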